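(* Let $\mathcal{L}_{\mathrm{all}}$ be the family of all PLDs and let $\mathcal{L}_{ED}:=\{L_{\varepsilon,\delta}:\varepsilon\ge0,\ \delta\in[0,1]\}$. For neither $\mathcal{L}=\mathcal{L}_{\mathrm{all}}$ nor $\mathcal{L}=\mathcal{L}_{ED}$ is the natural filter with queries in $\mathcal{L}$ free for every budget $B$ and every capacity $k$; i.e., in each case there exist a PLD $B$ and $k\ge1$ with $\mathrm{PLD}(\mathrm{Filter}_{\mathcal{L},B,k})\not\preceq B$.
   Context: Fix a pair of datasets $D_1,D_2$; mechanisms are randomized maps from datasets to outputs, adaptive mechanisms also take previous outputs. A PLD is the law of $\log\frac{dP}{dQ}(\omega)$, $\omega\sim P$, for distributions $P,Q$ on a common space (values in $\mathbb{R}\cup\{\infty\}$); $\mathrm{PLD}(M):=\mathrm{PLD}(M(D_1)\|M(D_2))$. Blackwell order $\preceq$ on PLDs: $L\preceq L'$ iff realizing pairs satisfy $P=\phi P'$, $Q=\phi Q'$ for a Markov kernel $\phi$. $\oplus$ is convolution, $\mathrm{Id}$ the point mass at $0$, $\sup$ the least upper bound. The tradeoff curve of a PLD (of a pair $(P,Q)$) is $\tau(\alpha)=\inf\{\beta_\phi:\alpha_\phi\le\alpha\}$ over tests, with Type I error $\alpha_\phi$ under $P$ and Type II error $\beta_\phi$ under $Q$; a PLD is determined by its tradeoff curve. $L_{\varepsilon,\delta}$ denotes the PLD whose tradeoff curve is $f_{\varepsilon,\delta}(\alpha)=\max\{0,\ 1-\delta-e^{\varepsilon}\alpha,\ e^{-\varepsilon}(1-\delta-\alpha)\}$.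 Adaptive composition $M_1\otimes M_2$ outputs $(Y_1,Y_2)$, $Y_1\sim M_1(D)$, $Y_2\sim M_2(D;Y_1)$. A privacy rule of length $k$ maps each sequence $(L_1,\dots,L_{k'})$, $0\le k'<k$, to a set of PLDs containing $\mathrm{Id}$; a $\Gamma$-adversary is $M_1\otimes\cdots\otimes M_k$ with $\mathrm{PLD}(M_i(\cdot;y_1,\dots,y_{i-1}))\in\Gamma(L_1,\dots,L_{i-1})$ for every history; $\mathrm{PLD}(\Gamma)$ is the sup of PLDs of $\Gamma$-adversaries. $\mathrm{Filter}_{\mathcal{L},B,k}(L_1,\dots,L_{k'}):=\{L\in\mathcal{L}:L_1\oplus\cdots\oplus L_{k'}\oplus L\preceq B\}$; the natural filter is free for $(\mathcal{L},B,k)$ if $\mathrm{PLD}(\mathrm{Filter}_{\mathcal{L},B,k})\preceq B$. *)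

theory Defs
  imports "HOL-Probability.Probability"
begin

text \<open>
  Datasets D1, D2 are fixed and encoded by a boolean flag
  (True = D1, False = D2).  A PLD is represented by a realizing pair (P, Q) of
  probability measures on a common measurable space; the PLD of a mechanism M
  is represented by the pair (M(D1), M(D2)).
\<close>

definition valid_pair :: "'a measure \<Rightarrow> 'a measure \<Rightarrow> bool" where
  "valid_pair P Q \<longleftrightarrow> prob_space P \<and> prob_space Q \<and> sets P = sets Q"

definition blackwell_le :: "'a measure \<Rightarrow> 'a measure \<Rightarrow> 'b measure \<Rightarrow> 'b measure \<Rightarrow> bool" where
  "blackwell_le P Q P' Q' \<longleftrightarrow>
     (\<exists>K \<in> P' \<rightarrow>\<^sub>M prob_algebra P. P = P' \<bind> K \<and> Q = Q' \<bind> K)"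

text \<open>Tradeoff curve of (P,Q): tests phi with values in [0,1] (probability of rejecting P);
  Type I error under P is the integral of phi, Type II error under Q the integral of 1 - phi.\<close>
definition tradeoff :: "'a measure \<Rightarrow> 'a measure \<Rightarrow> real \<Rightarrow> real" where
  "tradeoff P Q \<alpha> = Inf {\<beta>. \<exists>\<phi> \<in> borel_measurable P.
        (\<forall>\<omega>\<in>space P. 0 \<le> \<phi> \<omega> \<and> \<phi> \<omega> \<le> 1) \<and>
        (\<integral>\<omega>. \<phi> \<omega> \<partial>P) \<le> \<alpha> \<and> \<beta> = (\<integral>\<omega>. 1 - \<phi> \<omega> \<partial>Q)}"

definition f_eps_delta :: "real \<Rightarrow> real \<Rightarrow> real \<Rightarrow> real" where
  "f_eps_delta \<epsilon> \<delta> \<alpha> = max 0 (max (1 - \<delta> - exp \<epsilon> * \<alpha>) (exp (- \<epsilon>) * (1 - \<delta> - \<alpha>)))"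

definition L_all :: "real measure \<Rightarrow> real measure \<Rightarrow> bool" where
  "L_all P Q \<longleftrightarrow> True"

definition L_ED :: "real measure \<Rightarrow> real measure \<Rightarrow> bool" where
  "L_ED P Q \<longleftrightarrow> (\<exists>\<epsilon> \<delta>. \<epsilon> \<ge> 0 \<and> 0 \<le> \<delta> \<and> \<delta> \<le> 1 \<and>
       (\<forall>\<alpha>\<in>{0..1}. tradeoff P Q \<alpha> = f_eps_delta \<epsilon> \<delta> \<alpha>))"

definition history_space :: "nat \<Rightarrow> (nat \<Rightarrow> real) measure" where
  "history_space i = PiM {..<i} (\<lambda>_. borel)"

text \<open>Joint output law of the adaptive composition M_0 \<otimes> ... \<otimes> M_{i-1} on one dataset;
  A j h is the output distribution of the j-th (adaptive) mechanism given history h.\<close>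
fun joint :: "(nat \<Rightarrow> (nat \<Rightarrow> real) \<Rightarrow> real measure) \<Rightarrow> nat \<Rightarrow> (nat \<Rightarrow> real) measure" where
  "joint A 0 = return (history_space 0) (\<lambda>_. undefined)"
| "joint A (Suc i) = joint A i \<bind> (\<lambda>h. A i h \<bind> (\<lambda>y. return (history_space (Suc i)) (h(i := y))))"

text \<open>Realizing pair of L_0 \<oplus> ... \<oplus> L_i where L_j is the PLD of the j-th mechanism
  along the history h (convolution of PLDs = product of realizing pairs).\<close>
definition step_prod :: "(nat \<Rightarrow> (nat \<Rightarrow> real) \<Rightarrow> real measure) \<Rightarrow> nat \<Rightarrow> (nat \<Rightarrow> real) \<Rightarrow> (nat \<Rightarrow> real) measure" where
  "step_prod A i h = PiM {..i} (\<lambda>j. A j (restrict h {..<j}))"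

text \<open>A Filter_{L,B,k}-adversary: k adaptive mechanisms with real outputs such that, for every
  history, the PLD of the next mechanism lies in L and L_0 \<oplus> ... \<oplus> L_i \<preceq> B.\<close>
definition filter_adversary ::
  "(real measure \<Rightarrow> real measure \<Rightarrow> bool) \<Rightarrow> 'b measure \<Rightarrow> 'b measure \<Rightarrow> nat \<Rightarrow>
   (bool \<Rightarrow> nat \<Rightarrow> (nat \<Rightarrow> real) \<Rightarrow> real measure) \<Rightarrow> bool" where
  "filter_adversary Lmem PB QB k A \<longleftrightarrow>
     (\<forall>d. \<forall>i<k. A d i \<in> history_space i \<rightarrow>\<^sub>M prob_algebra (borel :: real measure)) \<and>
     (\<forall>i<k. \<forall>h\<in>space (history_space i).
        Lmem (A True i h) (A False i h) \<and>
        blackwell_le (step_prod (A True) i h) (step_prod (A False) i h) PB QB)"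

text \<open>The natural filter is free for (L,B,k) iff PLD(Filter_{L,B,k}) \<preceq> B, i.e. (by the least
  upper bound property) iff every Filter-adversary has PLD \<preceq> B.\<close>
definition natural_filter_free ::
  "(real measure \<Rightarrow> real measure \<Rightarrow> bool) \<Rightarrow> 'b measure \<Rightarrow> 'b measure \<Rightarrow> nat \<Rightarrow> bool" where
  "natural_filter_free Lmem PB QB k \<longleftrightarrow>
     (\<forall>A. filter_adversary Lmem PB QB k A \<longrightarrow>
        blackwell_le (joint (A True) k) (joint (A False) k) PB QB)"

end

theory Submission
  imports Defs
begin

text \<open>
  The budget B is a pair of distributions on ten atoms which dominates, through explicit
  post-processings, both non-adaptive compositions RR(ln 2) + TV(1/3) and RR(ln 2) + RR(ln 3);
  here RR(eps) is randomized response, with tradeoff curve f(eps, 0), and TV(delta) is the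
  three-point mechanism with tradeoff curve f(0, delta). The adversary runs RR(ln 2) and then
  TV(1/3) or RR(ln 3) according as its first output is 0 or 1. Every history therefore passes
  the natural filter, for the family of (eps, delta)-curves and a fortiori for all PLDs. Yet the
  event {(0, 2), (1, 1)} has probability 1/12 under D1 and 11/18 under D2, whereas a test on B of
  level 1/12 rejects under D2 with probability at most 1/2; so the adaptive composition is not
  Blackwell-below B.
\<close>

section \<open>Finite distributions on the real line\<close>

definition finite_dist :: "(real \<times> real) list \<Rightarrow> real measure" where
  "finite_dist xs = distr (measure_pmf (pmf_of_list xs)) borel (\<lambda>x. x)"

lemma sets_finite_dist [simp, measurable_cong]: "sets (finite_dist xs) = sets borel"
  by (simp add: finite_dist_def)

lemma space_finite_dist [simp]: "space (finite_dist xs) = UNIV"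
  by (simp add: finite_dist_def)

lemma measurable_finite_dist [simp]: "measurable (finite_dist xs) N = measurable borel N"
  by (rule measurable_cong_sets) simp_all

text \<open>No well-formedness hypothesis is needed: an ill-formed list still yields some pmf.\<close>

lemma prob_space_finite_dist: "prob_space (finite_dist xs)"
  unfolding finite_dist_def by (intro measure_pmf.prob_space_distr) auto

lemma finite_dist_in_prob_algebra: "finite_dist xs \<in> space (prob_algebra borel)"
  by (simp add: space_prob_algebra prob_space_finite_dist)

lemma sum_list_group_by_fst:
  assumes "finite A" "fst ` set xs \<subseteq> A"
  shows "(\<Sum>a\<in>A. \<Sum>z\<leftarrow>filter (\<lambda>z. fst z = a) xs. g z) = (\<Sum>z\<leftarrow>xs. g z)"
  using assms(2)
proof (induction xs)
  case (Cons x xs)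
  have "(\<Sum>a\<in>A. \<Sum>z\<leftarrow>filter (\<lambda>z. fst z = a) (x # xs). g z)
      = (\<Sum>a\<in>A. if fst x = a then g x else 0) + (\<Sum>a\<in>A. \<Sum>z\<leftarrow>filter (\<lambda>z. fst z = a) xs. g z)"
    unfolding sum.distrib[symmetric] by (intro sum.cong) auto
  also have "\<dots> = g x + (\<Sum>z\<leftarrow>xs. g z)"
    using Cons assms(1) by simp
  finally show ?case by simp
qed simp

lemma integral_finite_dist:
  fixes f :: "real \<Rightarrow> real"
  assumes wf: "pmf_of_list_wf xs" and [measurable]: "f \<in> borel_measurable borel"
  shows "(\<integral>x. f x \<partial>finite_dist xs) = (\<Sum>(x, w)\<leftarrow>xs. f x * w)"
proof -
  have "(\<integral>x. f x \<partial>finite_dist xs) = (\<integral>x. f x \<partial>measure_pmf (pmf_of_list xs))"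
    unfolding finite_dist_def by (subst integral_distr) auto
  also have "\<dots> = (\<Sum>a\<in>set (map fst xs). f a * pmf (pmf_of_list xs) a)"
    by (rule integral_measure_pmf_real) (use set_pmf_of_list[OF wf] in auto)
  also have "\<dots> = (\<Sum>a\<in>set (map fst xs). \<Sum>z\<leftarrow>filter (\<lambda>z. fst z = a) xs. f (fst z) * snd z)"
    by (intro sum.cong refl)
      (simp add: pmf_pmf_of_list[OF wf] sum_list_const_mult[symmetric],
       intro arg_cong[where f = sum_list] map_cong, simp_all)
  also have "\<dots> = (\<Sum>(x, w)\<leftarrow>xs. f x * w)"
    by (subst sum_list_group_by_fst) (auto simp: case_prod_unfold)
  finally show ?thesis .
qed

lemma measure_finite_dist:
  assumes "pmf_of_list_wf xs" "X \<in> sets borel"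
  shows "measure (finite_dist xs) X = (\<Sum>(x, w)\<leftarrow>xs. indicator X x * w)"
  using integral_finite_dist[OF assms(1), of "indicator X"] assms(2) by simp

section \<open>Tradeoff curves of randomized response and of the TV mechanism\<close>

lemma tradeoff_eqI:
  assumes lower: "\<And>\<phi>. \<phi> \<in> borel_measurable P \<Longrightarrow> (\<And>x. x \<in> space P \<Longrightarrow> 0 \<le> \<phi> x \<and> \<phi> x \<le> 1) \<Longrightarrow>
      (\<integral>x. \<phi> x \<partial>P) \<le> \<alpha> \<Longrightarrow> \<beta> \<le> (\<integral>x. 1 - \<phi> x \<partial>Q)"
    and witness: "\<psi> \<in> borel_measurable P" "\<And>x. x \<in> space P \<Longrightarrow> 0 \<le> \<psi> x \<and> \<psi> x \<le> 1"
      "(\<integral>x. \<psi> x \<partial>P) \<le> \<alpha>" "(\<integral>x. 1 - \<psi> x \<partial>Q) \<le> \<beta>"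
  shows "tradeoff P Q \<alpha> = \<beta>"
  unfolding tradeoff_def
proof (rule cInf_eq_minimum)
  have "\<beta> \<le> (\<integral>x. 1 - \<psi> x \<partial>Q)" using lower witness(1-3) by blast
  then show "\<beta> \<in> {\<beta>. \<exists>\<phi>\<in>borel_measurable P. (\<forall>\<omega>\<in>space P. 0 \<le> \<phi> \<omega> \<and> \<phi> \<omega> \<le> 1) \<and>
      (\<integral>\<omega>. \<phi> \<omega> \<partial>P) \<le> \<alpha> \<and> \<beta> = (\<integral>\<omega>. 1 - \<phi> \<omega> \<partial>Q)}"
    using witness by (intro CollectI bexI[of _ \<psi>]) auto
qed (use lower in blast)

lemma randomized_response_bound:
  fixes c a b \<alpha> :: real
  assumes c: "1 \<le> c" and ab: "0 \<le> a" "a \<le> 1" "0 \<le> b" "b \<le> 1"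
    and level: "c * a + b \<le> (1 + c) * \<alpha>"
  shows "max 0 (max (1 - c * \<alpha>) ((1 - \<alpha>) / c)) \<le> 1 - (a + c * b) / (1 + c)"
proof -
  have cc: "0 \<le> c * c - 1" using mult_mono[OF c c] c by simp
  have "1 - c * \<alpha> \<le> 1 - (a + c * b) / (1 + c)"
  proof -
    have "c * (c * a + b) - (a + c * b) = (c * c - 1) * a" by (simp add: algebra_simps)
    then have "a + c * b \<le> c * (c * a + b)" using mult_nonneg_nonneg[OF cc ab(1)] by linarith
    also have "\<dots> \<le> c * ((1 + c) * \<alpha>)" using level c by simp
    finally show ?thesis using c by (simp add: field_simps)
  qed
  moreover have "(1 - \<alpha>) / c \<le> 1 - (a + c * b) / (1 + c)"
  proof -
    have "(1 + c) * (1 - \<alpha>) \<le> (1 + c) - c * a - b" using level by (simp add: algebra_simps)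
    also have "\<dots> \<le> c * ((1 + c) - a - c * b)"
    proof -
      have "c * ((1 + c) - a - c * b) - ((1 + c) - c * a - b) = (c * c - 1) * (1 - b)"
        by (simp add: algebra_simps)
      moreover have "0 \<le> (c * c - 1) * (1 - b)" using cc ab(4) by simp
      ultimately show ?thesis by linarith
    qed
    finally show ?thesis using c by (simp add: field_simps)
  qed
  moreover have "0 \<le> 1 - (a + c * b) / (1 + c)"
  proof -
    have "c * b \<le> c" using mult_left_mono[OF ab(4), of c] c by simp
    then have "a + c * b \<le> 1 + c" using ab(2) by linarith
    then have "(a + c * b) / (1 + c) \<le> 1" using c by simp
    then show ?thesis by simp
  qed
  ultimately show ?thesis by simp
qed

definition randomized_response :: "real \<Rightarrow> bool \<Rightarrow> (real \<times> real) list" where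
  "randomized_response \<epsilon> d =
     (if d then [(0, exp \<epsilon> / (1 + exp \<epsilon>)), (1, 1 / (1 + exp \<epsilon>))]
      else [(0, 1 / (1 + exp \<epsilon>)), (1, exp \<epsilon> / (1 + exp \<epsilon>))])"

lemma pmf_of_list_wf_randomized_response: "pmf_of_list_wf (randomized_response \<epsilon> d)"
proof -
  have "0 < 1 + exp \<epsilon>" by (simp add: add_pos_pos)
  then show ?thesis
    by (auto simp: pmf_of_list_wf_def randomized_response_def add_divide_distrib[symmetric])
qed

lemma randomized_response_ln:
  "0 < c \<Longrightarrow> randomized_response (ln c) d =
     (if d then [(0, c / (1 + c)), (1, 1 / (1 + c))] else [(0, 1 / (1 + c)), (1, c / (1 + c))])"
  by (simp add: randomized_response_def)

lemma integral_randomized_response: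
  assumes "\<phi> \<in> borel_measurable borel"
  shows "(\<integral>x. \<phi> x \<partial>finite_dist (randomized_response \<epsilon> d))
    = (if d then exp \<epsilon> * \<phi> 0 + \<phi> 1 else \<phi> 0 + exp \<epsilon> * \<phi> 1) / (1 + exp \<epsilon>)"
  using assms by (simp add: integral_finite_dist pmf_of_list_wf_randomized_response)
    (simp add: randomized_response_def add_divide_distrib ac_simps)

lemma f_eps_delta_zero_delta:
  "f_eps_delta \<epsilon> 0 \<alpha> = max 0 (max (1 - exp \<epsilon> * \<alpha>) ((1 - \<alpha>) / exp \<epsilon>))"
  by (simp add: f_eps_delta_def exp_minus divide_inverse mult.commute)

lemma randomized_response_power_bound:
  assumes \<epsilon>: "0 \<le> \<epsilon>" and \<phi>: "\<phi> \<in> borel_measurable borel" "\<And>x. 0 \<le> \<phi> x \<and> \<phi> x \<le> 1"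
    and level: "(\<integral>x. \<phi> x \<partial>finite_dist (randomized_response \<epsilon> True)) \<le> \<alpha>"
  shows "f_eps_delta \<epsilon> 0 \<alpha> \<le> (\<integral>x. 1 - \<phi> x \<partial>finite_dist (randomized_response \<epsilon> False))"
proof -
  define c where "c = exp \<epsilon>"
  have c: "1 \<le> c" using \<epsilon> by (simp add: c_def)
  have "(c * \<phi> 0 + \<phi> 1) / (1 + c) \<le> \<alpha>"
    using level by (simp add: integral_randomized_response \<phi>(1) c_def)
  then have level_scaled: "c * \<phi> 0 + \<phi> 1 \<le> (1 + c) * \<alpha>"
    using c by (simp add: pos_divide_le_eq mult.commute)
  have "max 0 (max (1 - c * \<alpha>) ((1 - \<alpha>) / c)) \<le> 1 - (\<phi> 0 + c * \<phi> 1) / (1 + c)"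
    by (rule randomized_response_bound[OF c _ _ _ _ level_scaled]) (use \<phi>(2) in auto)
  moreover have "(\<integral>x. 1 - \<phi> x \<partial>finite_dist (randomized_response \<epsilon> False)) = 1 - (\<phi> 0 + c * \<phi> 1) / (1 + c)"
  proof -
    have "(\<lambda>x. 1 - \<phi> x) \<in> borel_measurable borel" using \<phi>(1) by measurable
    then show ?thesis
      using c by (simp add: integral_randomized_response c_def[symmetric]) (simp add: field_simps)
  qed
  ultimately show ?thesis
    by (simp add: f_eps_delta_zero_delta c_def)
qed

lemma randomized_response_optimal_test:
  assumes \<epsilon>: "0 \<le> \<epsilon>" and \<alpha>: "0 \<le> \<alpha>" "\<alpha> \<le> 1"
  obtains \<psi> where "\<psi> \<in> borel_measurable borel" "\<And>x. 0 \<le> \<psi> x \<and> \<psi> x \<le> 1"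
    "(\<integral>x. \<psi> x \<partial>finite_dist (randomized_response \<epsilon> True)) \<le> \<alpha>"
    "(\<integral>x. 1 - \<psi> x \<partial>finite_dist (randomized_response \<epsilon> False)) \<le> f_eps_delta \<epsilon> 0 \<alpha>"
proof -
  define c where "c = exp \<epsilon>"
  have c: "1 \<le> c" using \<epsilon> by (simp add: c_def)
  then have c1: "1 + c \<noteq> 0" by simp
  have typeI: "(\<integral>x. \<psi> x \<partial>finite_dist (randomized_response \<epsilon> True)) = (c * \<psi> 0 + \<psi> 1) / (1 + c)"
    and typeII: "(\<integral>x. 1 - \<psi> x \<partial>finite_dist (randomized_response \<epsilon> False)) = 1 - (\<psi> 0 + c * \<psi> 1) / (1 + c)"
    if "\<psi> \<in> borel_measurable borel" for \<psi>
  proof -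
    have "(\<lambda>x. 1 - \<psi> x) \<in> borel_measurable borel" using that by measurable
    then show "(\<integral>x. \<psi> x \<partial>finite_dist (randomized_response \<epsilon> True)) = (c * \<psi> 0 + \<psi> 1) / (1 + c)"
      and "(\<integral>x. 1 - \<psi> x \<partial>finite_dist (randomized_response \<epsilon> False)) = 1 - (\<psi> 0 + c * \<psi> 1) / (1 + c)"
      using that c by (simp_all add: integral_randomized_response c_def[symmetric]) (simp add: field_simps)
  qed
  have f: "f_eps_delta \<epsilon> 0 \<alpha> = max 0 (max (1 - c * \<alpha>) ((1 - \<alpha>) / c))"
    by (simp add: f_eps_delta_zero_delta c_def)
  \<comment> \<open>Neyman-Pearson: reject on outcome 1 first, then randomise on outcome 0.\<close>
  show thesis
  proof (cases "(1 + c) * \<alpha> \<le> 1")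
    case True
    show thesis
      by (rule that[of "\<lambda>x. if x = 1 then (1 + c) * \<alpha> else 0"])
        (use True c \<alpha> in \<open>auto simp: typeI typeII f c1\<close>)
  next
    case False
    have "(1 + c) * \<alpha> \<le> 1 + c"
      using mult_left_le[OF \<alpha>(2), of "1 + c"] c by simp
    then have "(1 + c) * \<alpha> - 1 \<le> c"
      by linarith
    then have "((1 + c) * \<alpha> - 1) / c \<le> 1"
      using c by simp
    moreover have "1 - (((1 + c) * \<alpha> - 1) / c + c) / (1 + c) = (1 - \<alpha>) / c"
      using c by (simp add: divide_simps) (simp add: algebra_simps)
    ultimately show thesis
      by (intro that[of "\<lambda>x. if x = 1 then 1 else ((1 + c) * \<alpha> - 1) / c"])
        (use False c in \<open>auto simp: typeI typeII f\<close>)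
  qed
qed

lemma tradeoff_randomized_response:
  assumes "0 \<le> \<epsilon>" "0 \<le> \<alpha>" "\<alpha> \<le> 1"
  shows "tradeoff (finite_dist (randomized_response \<epsilon> True))
           (finite_dist (randomized_response \<epsilon> False)) \<alpha> = f_eps_delta \<epsilon> 0 \<alpha>"
proof (rule randomized_response_optimal_test[OF assms])
  fix \<psi> :: "real \<Rightarrow> real"
  assume "\<psi> \<in> borel_measurable borel" "\<And>x. 0 \<le> \<psi> x \<and> \<psi> x \<le> 1"
    "(\<integral>x. \<psi> x \<partial>finite_dist (randomized_response \<epsilon> True)) \<le> \<alpha>"
    "(\<integral>x. 1 - \<psi> x \<partial>finite_dist (randomized_response \<epsilon> False)) \<le> f_eps_delta \<epsilon> 0 \<alpha>"
  then show ?thesis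
    by (intro tradeoff_eqI[where \<psi> = \<psi>] randomized_response_power_bound[OF assms(1)]) auto
qed

definition tv_mechanism :: "real \<Rightarrow> bool \<Rightarrow> (real \<times> real) list" where
  "tv_mechanism \<delta> d = (if d then [(0, \<delta>), (1, 1 - \<delta>)] else [(1, 1 - \<delta>), (2, \<delta>)])"

lemma pmf_of_list_wf_tv_mechanism:
  "0 \<le> \<delta> \<Longrightarrow> \<delta> \<le> 1 \<Longrightarrow> pmf_of_list_wf (tv_mechanism \<delta> d)"
  by (auto simp: pmf_of_list_wf_def tv_mechanism_def)

lemma tradeoff_tv_mechanism:
  assumes \<delta>: "0 \<le> \<delta>" "\<delta> \<le> 1" and \<alpha>: "0 \<le> \<alpha>" "\<alpha> \<le> 1"
  shows "tradeoff (finite_dist (tv_mechanism \<delta> True))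
           (finite_dist (tv_mechanism \<delta> False)) \<alpha> = f_eps_delta 0 \<delta> \<alpha>"
proof -
  have f: "f_eps_delta 0 \<delta> \<alpha> = max 0 (1 - \<delta> - \<alpha>)"
    by (simp add: f_eps_delta_def)
  have typeI: "(\<integral>x. \<phi> x \<partial>finite_dist (tv_mechanism \<delta> True)) = \<delta> * \<phi> 0 + (1 - \<delta>) * \<phi> 1"
    and typeII: "(\<integral>x. 1 - \<phi> x \<partial>finite_dist (tv_mechanism \<delta> False)) = (1 - \<delta>) - (1 - \<delta>) * \<phi> 1 + \<delta> * (1 - \<phi> 2)"
    if "\<phi> \<in> borel_measurable borel" for \<phi>
    using that by (simp_all add: integral_finite_dist pmf_of_list_wf_tv_mechanism \<delta>)
      (simp_all add: tv_mechanism_def algebra_simps)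
  have lower: "f_eps_delta 0 \<delta> \<alpha> \<le> (\<integral>x. 1 - \<phi> x \<partial>finite_dist (tv_mechanism \<delta> False))"
    if "\<phi> \<in> borel_measurable (finite_dist (tv_mechanism \<delta> True))"
      "\<And>x. x \<in> space (finite_dist (tv_mechanism \<delta> True)) \<Longrightarrow> 0 \<le> \<phi> x \<and> \<phi> x \<le> 1"
      "(\<integral>x. \<phi> x \<partial>finite_dist (tv_mechanism \<delta> True)) \<le> \<alpha>" for \<phi>
  proof -
    have "\<delta> * \<phi> 0 + (1 - \<delta>) * \<phi> 1 \<le> \<alpha>"
      using that(3) unfolding typeI[OF that(1)[simplified]] .
    moreover have "0 \<le> \<delta> * \<phi> 0" "0 \<le> \<delta> * (1 - \<phi> 2)" "(1 - \<delta>) * \<phi> 1 \<le> 1 - \<delta>"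
      using that(2) \<delta> by (simp_all add: mult_left_le)
    ultimately show ?thesis
      unfolding f typeII[OF that(1)[simplified]] by simp
  qed
  show ?thesis
  proof (cases "\<alpha> < 1 - \<delta>")
    case True
    show ?thesis
    proof (rule tradeoff_eqI[OF lower, where \<psi> = "\<lambda>x. if x = 0 then 0 else if x = 1 then \<alpha> / (1 - \<delta>) else 1"])
    qed (use True \<alpha> in \<open>auto simp: typeI typeII f\<close>)
  next
    case False
    show ?thesis
    proof (rule tradeoff_eqI[OF lower, where \<psi> = "\<lambda>x. if x = 0 then 0 else 1"])
    qed (use False \<alpha> in \<open>auto simp: typeI typeII f\<close>)
  qed
qed

lemma L_ED_randomized_response:
  "0 \<le> \<epsilon> \<Longrightarrow> L_ED (finite_dist (randomized_response \<epsilon> True)) (finite_dist (randomized_response \<epsilon> False))"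
  unfolding L_ED_def by (intro exI[of _ \<epsilon>] exI[of _ 0]) (simp add: tradeoff_randomized_response)

lemma L_ED_tv_mechanism:
  "0 \<le> \<delta> \<Longrightarrow> \<delta> \<le> 1 \<Longrightarrow> L_ED (finite_dist (tv_mechanism \<delta> True)) (finite_dist (tv_mechanism \<delta> False))"
  unfolding L_ED_def by (intro exI[of _ 0] exI[of _ \<delta>]) (simp add: tradeoff_tv_mechanism)

section \<open>Blackwell order\<close>

lemma blackwell_le_postprocessing:
  assumes F: "F \<in> PB \<rightarrow>\<^sub>M P" and sets_QB: "sets QB = sets PB" and sets_Q: "sets Q = sets P"
    and ne: "space PB \<noteq> {}" and P: "P = distr PB P F" and Q: "Q = distr QB Q F"
  shows "blackwell_le P Q PB QB"
  unfolding blackwell_le_def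
proof (intro bexI conjI)
  show "(\<lambda>x. return P (F x)) \<in> PB \<rightarrow>\<^sub>M prob_algebra P"
    using F by measurable
  show "P = PB \<bind> (\<lambda>x. return P (F x))"
    by (subst bind_return_distr'[OF ne F]) (rule P)
  have "F \<in> QB \<rightarrow>\<^sub>M P"
    using F by (simp cong: measurable_cong_sets add: sets_QB)
  moreover have "space QB \<noteq> {}"
    using ne sets_eq_imp_space_eq[OF sets_QB] by simp
  ultimately have "QB \<bind> (\<lambda>x. return P (F x)) = distr QB P F"
    by (rule bind_return_distr'[rotated])
  also have "\<dots> = Q"
    by (subst Q) (rule distr_cong, simp_all add: sets_Q)
  finally show "Q = QB \<bind> (\<lambda>x. return P (F x))" ..
qed

lemma blackwell_le_test:
  assumes bw: "blackwell_le P Q PB QB" and valid: "valid_pair PB QB" and S: "S \<in> sets P"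
  obtains g where "g \<in> borel_measurable PB" "\<And>x. x \<in> space PB \<Longrightarrow> 0 \<le> g x \<and> g x \<le> 1"
    "measure P S = (\<integral>x. g x \<partial>PB)" "measure Q S = (\<integral>x. g x \<partial>QB)"
proof -
  obtain K where K: "K \<in> PB \<rightarrow>\<^sub>M prob_algebra P" and P: "P = PB \<bind> K" and Q: "Q = QB \<bind> K"
    using bw unfolding blackwell_le_def by blast
  interpret PB: prob_space PB using valid by (simp add: valid_pair_def)
  interpret QB: prob_space QB using valid by (simp add: valid_pair_def)
  have sets_QB: "sets QB = sets PB" using valid by (simp add: valid_pair_def)
  have K_sub: "K \<in> PB \<rightarrow>\<^sub>M subprob_algebra P" "K \<in> QB \<rightarrow>\<^sub>M subprob_algebra P"
    using measurable_prob_algebraD[OF K] by (simp_all cong: measurable_cong_sets add: sets_QB)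
  show thesis
  proof
    show "(\<lambda>x. measure (K x) S) \<in> borel_measurable PB"
      using K S by measurable
    show "0 \<le> measure (K x) S \<and> measure (K x) S \<le> 1" if "x \<in> space PB" for x
      using measurable_space[OF K that] by (simp add: space_prob_algebra prob_space.prob_le_1)
    show "measure P S = (\<integral>x. measure (K x) S \<partial>PB)"
      unfolding P by (rule PB.measure_bind[OF K_sub(1) S])
    show "measure Q S = (\<integral>x. measure (K x) S \<partial>QB)"
      unfolding Q by (rule QB.measure_bind[OF K_sub(2) S])
  qed
qed

lemma distr_eq_PiM_prob:
  assumes I: "finite I" and N: "prob_space N" and M: "\<And>i. prob_space (M i)"
    and F: "F \<in> N \<rightarrow>\<^sub>M PiM I M"
    and box: "\<And>X. (\<And>i. i \<in> I \<Longrightarrow> X i \<in> sets (M i)) \<Longrightarrow>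
      measure N (F -` Pi\<^sub>E I X \<inter> space N) = (\<Prod>i\<in>I. measure (M i) (X i))"
  shows "distr N (PiM I M) F = PiM I M"
proof -
  interpret product_sigma_finite M
    using M by (simp add: product_sigma_finite_def prob_space_imp_sigma_finite)
  show ?thesis
  proof (rule PiM_eqI[OF I])
    fix X assume X: "\<And>i. i \<in> I \<Longrightarrow> X i \<in> sets (M i)"
    have "emeasure (distr N (PiM I M) F) (Pi\<^sub>E I X) = emeasure N (F -` Pi\<^sub>E I X \<inter> space N)"
      using X by (intro emeasure_distr[OF F] sets_PiM_I_finite I)
    also have "\<dots> = ennreal (\<Prod>i\<in>I. measure (M i) (X i))"
      using box[OF X] by (simp add: finite_measure.emeasure_eq_measure[OF prob_space.finite_measure[OF N]])
    also have "\<dots> = (\<Prod>i\<in>I. emeasure (M i) (X i))"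
      by (simp add: prod_ennreal finite_measure.emeasure_eq_measure[OF prob_space.finite_measure[OF M]])
    finally show "emeasure (distr N (PiM I M) F) (Pi\<^sub>E I X) = (\<Prod>i\<in>I. emeasure (M i) (X i))" .
  qed simp
qed

lemma distr_split_eq_PiM:
  fixes N :: "real measure" and M :: "nat \<Rightarrow> real measure" and s :: "nat \<Rightarrow> real \<Rightarrow> real"
  assumes N: "prob_space N" "sets N = sets borel"
    and M: "\<And>j. prob_space (M j)" "\<And>j. sets (M j) = sets borel"
    and s: "\<And>j. s j \<in> borel_measurable borel"
    and split: "\<And>X Y. X \<in> sets borel \<Longrightarrow> Y \<in> sets borel \<Longrightarrow>
      measure N (s 0 -` X \<inter> s 1 -` Y) = measure (M 0) X * measure (M 1) Y"
    and i: "i \<le> 1"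
  shows "distr N (PiM {..i} M) (\<lambda>x. \<lambda>j\<in>{..i}. s j x) = PiM {..i} M"
proof (rule distr_eq_PiM_prob[OF _ N(1) M(1)])
  have space_N: "space N = UNIV"
    using sets_eq_imp_space_eq[OF N(2)] by simp
  show "(\<lambda>x. \<lambda>j\<in>{..i}. s j x) \<in> N \<rightarrow>\<^sub>M PiM {..i} M"
    using s by (intro measurable_restrict) (simp cong: measurable_cong_sets add: N(2) M(2))
  fix X assume X: "\<And>j. j \<in> {..i} \<Longrightarrow> X j \<in> sets (M j)"
  show "measure N ((\<lambda>x. \<lambda>j\<in>{..i}. s j x) -` Pi\<^sub>E {..i} X \<inter> space N) = (\<Prod>j\<in>{..i}. measure (M j) (X j))"
  proof (cases "i = 0")
    case True
    have "measure N ((\<lambda>x. \<lambda>j\<in>{..i}. s j x) -` Pi\<^sub>E {..i} X \<inter> space N) = measure N (s 0 -` X 0 \<inter> s 1 -` UNIV)"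
      using True by (simp add: space_N vimage_def PiE_iff)
    also have "\<dots> = measure (M 0) (X 0)"
      using X[of 0] split[of "X 0" UNIV] prob_space.prob_space[OF M(1)] sets_eq_imp_space_eq[OF M(2)]
      by (simp add: M(2))
    finally show ?thesis using True by simp
  next
    case False
    then have i1: "i = 1" using i by simp
    have "measure N ((\<lambda>x. \<lambda>j\<in>{..i}. s j x) -` Pi\<^sub>E {..i} X \<inter> space N) = measure N (s 0 -` X 0 \<inter> s 1 -` X 1)"
      using i1 by (intro arg_cong[where f = "measure N"]) (auto simp: space_N PiE_iff le_Suc_eq)
    also have "\<dots> = measure (M 0) (X 0) * measure (M 1) (X 1)"
      using X[of 0] X[of 1] i1 by (intro split) (simp_all add: M(2))
    finally show ?thesis using i1 by (simp add: atMost_Suc mult.commute)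
  qed
qed simp

lemma blackwell_le_product_two:
  fixes B :: "bool \<Rightarrow> real measure" and M :: "bool \<Rightarrow> nat \<Rightarrow> real measure"
    and s :: "nat \<Rightarrow> real \<Rightarrow> real"
  assumes B: "\<And>d. prob_space (B d)" "\<And>d. sets (B d) = sets borel"
    and M: "\<And>d j. prob_space (M d j)" "\<And>d j. sets (M d j) = sets borel"
    and s: "\<And>j. s j \<in> borel_measurable borel"
    and split: "\<And>d X Y. X \<in> sets borel \<Longrightarrow> Y \<in> sets borel \<Longrightarrow>
      measure (B d) (s 0 -` X \<inter> s 1 -` Y) = measure (M d 0) X * measure (M d 1) Y"
    and i: "i \<le> 1"
  shows "blackwell_le (PiM {..i} (M True)) (PiM {..i} (M False)) (B True) (B False)"
proof (rule blackwell_le_postprocessing)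
  have "distr (B d) (PiM {..i} (M d)) (\<lambda>x. \<lambda>j\<in>{..i}. s j x) = PiM {..i} (M d)" for d
    by (rule distr_split_eq_PiM[OF B(1)[of d] B(2)[of d] M(1)[where d = d] M(2)[where d = d] s split[where d = d] i])
  then show "PiM {..i} (M True) = distr (B True) (PiM {..i} (M True)) (\<lambda>x. \<lambda>j\<in>{..i}. s j x)"
    and "PiM {..i} (M False) = distr (B False) (PiM {..i} (M False)) (\<lambda>x. \<lambda>j\<in>{..i}. s j x)"
    by simp_all
  show "(\<lambda>x. \<lambda>j\<in>{..i}. s j x) \<in> B True \<rightarrow>\<^sub>M PiM {..i} (M True)"
    using s by (intro measurable_restrict) (simp cong: measurable_cong_sets add: B(2) M(2))
  show "sets (B False) = sets (B True)" by (simp add: B(2))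
  show "sets (PiM {..i} (M False)) = sets (PiM {..i} (M True))"
    by (intro sets_PiM_cong) (simp_all add: M(2))
  show "space (B True) \<noteq> {}"
    using prob_space.not_empty[OF B(1)] .
qed

section \<open>Adaptive composition of two mechanisms\<close>

lemma space_history_space: "space (history_space i) = {..<i} \<rightarrow>\<^sub>E UNIV"
  by (simp add: history_space_def space_PiM)

lemma measurable_history_extend:
  "(\<lambda>(h, y). h(i := y)) \<in> history_space i \<Otimes>\<^sub>M borel \<rightarrow>\<^sub>M history_space (Suc i)"
  using measurable_add_dim[of i "{..<i}" "\<lambda>_. borel :: real measure"]
  by (simp add: history_space_def lessThan_Suc)

lemma measurable_history_extend_at:
  assumes "h \<in> space (history_space i)" and "sets M = sets borel"
  shows "(\<lambda>y. h(i := y)) \<in> M \<rightarrow>\<^sub>M history_space (Suc i)"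
  using measurable_Pair2[OF measurable_history_extend assms(1)]
  by (simp cong: measurable_cong_sets add: assms(2))

lemma bind_return_history_extend:
  assumes "h \<in> space (history_space i)" and "prob_space K" "sets K = sets borel"
  shows "K \<bind> (\<lambda>y. return (history_space (Suc i)) (h(i := y)))
    = distr K (history_space (Suc i)) (\<lambda>y. h(i := y))"
  using prob_space.not_empty[OF assms(2)] measurable_history_extend_at[OF assms(1,3)]
  by (rule bind_return_distr')

lemma measurable_history_step:
  assumes "K \<in> history_space i \<rightarrow>\<^sub>M prob_algebra borel"
  shows "(\<lambda>h. K h \<bind> (\<lambda>y. return (history_space (Suc i)) (h(i := y))))
           \<in> history_space i \<rightarrow>\<^sub>M prob_algebra (history_space (Suc i))"
proof (rule measurable_bind_prob_space2[OF assms])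
  show "(\<lambda>(h, y). return (history_space (Suc i)) (h(i := y)))
      \<in> history_space i \<Otimes>\<^sub>M borel \<rightarrow>\<^sub>M prob_algebra (history_space (Suc i))"
    using measurable_compose[OF measurable_history_extend measurable_return_prob_space]
    by (simp add: case_prod_unfold)
qed

lemma joint_in_prob_algebra:
  assumes "\<And>j. j < i \<Longrightarrow> A j \<in> history_space j \<rightarrow>\<^sub>M prob_algebra borel"
  shows "joint A i \<in> space (prob_algebra (history_space i))"
  using assms
proof (induction i)
  case 0
  have "(\<lambda>_. undefined) \<in> space (history_space 0)"
    by (simp add: space_history_space)
  then show ?case by (simp add: space_prob_algebra prob_space_return)
next
  case (Suc i)
  have A: "joint A i \<in> space (prob_algebra (history_space i))"
    using Suc by simp
  have K: "(\<lambda>h. A i h \<bind> (\<lambda>y. return (history_space (Suc i)) (h(i := y))))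
      \<in> history_space i \<rightarrow>\<^sub>M prob_algebra (history_space (Suc i))"
    using Suc.prems by (intro measurable_history_step) simp
  show ?case
    using prob_space_bind'[OF A K] sets_bind'[OF A K] by (simp add: space_prob_algebra)
qed

lemma measure_joint_Suc:
  assumes A: "\<And>j. j \<le> i \<Longrightarrow> A j \<in> history_space j \<rightarrow>\<^sub>M prob_algebra borel"
    and S: "S \<in> sets (history_space (Suc i))"
  shows "measure (joint A (Suc i)) S = (\<integral>h. measure (A i h) {y. h(i := y) \<in> S} \<partial>joint A i)"
proof -
  have J: "joint A i \<in> space (prob_algebra (history_space i))"
    using A by (intro joint_in_prob_algebra) simp
  then interpret J: prob_space "joint A i"
    by (simp add: space_prob_algebra)
  have sets_J: "sets (joint A i) = sets (history_space i)"
    using J by (simp add: space_prob_algebra)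
  let ?K = "\<lambda>h. A i h \<bind> (\<lambda>y. return (history_space (Suc i)) (h(i := y)))"
  have K: "?K \<in> joint A i \<rightarrow>\<^sub>M subprob_algebra (history_space (Suc i))"
    using measurable_prob_algebraD[OF measurable_history_step[OF A[OF order_refl]]]
    by (simp cong: measurable_cong_sets add: sets_J)
  have "measure (joint A (Suc i)) S = (\<integral>h. measure (?K h) S \<partial>joint A i)"
    by (simp add: J.measure_bind[OF K S])
  also have "\<dots> = (\<integral>h. measure (A i h) {y. h(i := y) \<in> S} \<partial>joint A i)"
  proof (rule Bochner_Integration.integral_cong[OF refl])
    fix h assume "h \<in> space (joint A i)"
    then have h: "h \<in> space (history_space i)"
      using sets_eq_imp_space_eq[OF sets_J] by simp
    have Ah: "prob_space (A i h)" "sets (A i h) = sets borel"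
      using measurable_space[OF A[OF order_refl] h] by (simp_all add: space_prob_algebra)
    have "measure (?K h) S = measure (A i h) ((\<lambda>y. h(i := y)) -` S \<inter> space (A i h))"
      unfolding bind_return_history_extend[OF h Ah]
      by (rule measure_distr[OF measurable_history_extend_at[OF h Ah(2)] S])
    then show "measure (?K h) S = measure (A i h) {y. h(i := y) \<in> S}"
      using sets_eq_imp_space_eq[OF Ah(2)] by (simp add: vimage_def)
  qed
  finally show ?thesis .
qed

lemma joint_one:
  assumes "A 0 \<in> history_space 0 \<rightarrow>\<^sub>M prob_algebra borel"
  shows "joint A 1 = distr (A 0 (\<lambda>_. undefined)) (history_space 1) (\<lambda>y. (\<lambda>_. undefined)(0 := y))"
proof -
  let ?u = "\<lambda>_::nat. undefined :: real"
  have u: "?u \<in> space (history_space 0)"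
    by (simp add: space_history_space)
  have A0: "prob_space (A 0 ?u)" "sets (A 0 ?u) = sets borel"
    using measurable_space[OF assms u] by (simp_all add: space_prob_algebra)
  have "joint A 1 = return (history_space 0) ?u \<bind> (\<lambda>h. A 0 h \<bind> (\<lambda>y. return (history_space 1) (h(0 := y))))"
    by simp
  also have "\<dots> = A 0 ?u \<bind> (\<lambda>y. return (history_space 1) (?u(0 := y)))"
    using measurable_prob_algebraD[OF measurable_history_step[OF assms]] u
    by (simp add: bind_return)
  also have "\<dots> = distr (A 0 ?u) (history_space 1) (\<lambda>y. ?u(0 := y))"
    using bind_return_history_extend[OF u A0] by simp
  finally show ?thesis .
qed

lemma measure_joint_two:
  assumes A0: "A 0 \<in> history_space 0 \<rightarrow>\<^sub>M prob_algebra borel"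
    and A1: "A 1 \<in> history_space 1 \<rightarrow>\<^sub>M prob_algebra borel"
    and S: "S \<in> sets (history_space 2)"
  shows "measure (joint A 2) S = (\<integral>y. measure (A 1 ((\<lambda>_. undefined)(0 := y)))
           {z. (\<lambda>_. undefined)(0 := y, 1 := z) \<in> S} \<partial>A 0 (\<lambda>_. undefined))"
proof -
  have A: "A j \<in> history_space j \<rightarrow>\<^sub>M prob_algebra borel" if "j \<le> 1" for j
    using that A0 A1 by (cases j) auto
  have "Sigma (space (history_space 1)) (\<lambda>h. {y. h(1 := y) \<in> S})
      = (\<lambda>(h, y). h(1 := y)) -` S \<inter> space (history_space 1 \<Otimes>\<^sub>M borel)"
    by (auto simp: space_pair_measure)
  then have "Sigma (space (history_space 1)) (\<lambda>h. {y. h(1 := y) \<in> S}) \<in> sets (history_space 1 \<Otimes>\<^sub>M borel)"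
    using measurable_sets[OF measurable_history_extend[of 1] S[unfolded Suc_1[symmetric]]] by simp
  then have meas: "(\<lambda>h. measure (A 1 h) {y. h(1 := y) \<in> S}) \<in> borel_measurable (history_space 1)"
    by (rule measure_measurable_prob_algebra2[OF _ A1])
  have u: "(\<lambda>_. undefined) \<in> space (history_space 0)"
    by (simp add: space_history_space)
  then have "sets (A 0 (\<lambda>_. undefined)) = sets borel"
    using measurable_space[OF A0 u] by (simp add: space_prob_algebra)
  then have ext: "(\<lambda>y. (\<lambda>_. undefined)(0 := y)) \<in> A 0 (\<lambda>_. undefined) \<rightarrow>\<^sub>M history_space 1"
    using measurable_history_extend_at[OF u] by simp
  have "measure (joint A 2) S = measure (joint A (Suc 1)) S"
    by (simp only: Suc_1)
  also have "\<dots> = (\<integral>h. measure (A 1 h) {y. h(1 := y) \<in> S} \<partial>joint A 1)"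
    by (rule measure_joint_Suc[OF A]) (use S in \<open>simp_all add: numeral_2_eq_2\<close>)
  also have "\<dots> = (\<integral>y. measure (A 1 ((\<lambda>_. undefined)(0 := y)))
           {z. (\<lambda>_. undefined)(0 := y, 1 := z) \<in> S} \<partial>A 0 (\<lambda>_. undefined))"
    unfolding joint_one[of A, OF A0] by (rule integral_distr[OF ext meas])
  finally show ?thesis .
qed

section \<open>The counterexample\<close>

definition budget :: "bool \<Rightarrow> (real \<times> real) list" where
  "budget d = (if d
     then [(0, 2/9), (1, 1/9), (2, 1/6), (3, 1/18), (4, 2/9), (5, 1/9), (6, 1/36), (7, 1/12)]
     else [(2, 1/12), (3, 1/36), (4, 1/9), (5, 2/9), (6, 1/18), (7, 1/6), (8, 1/9), (9, 2/9)])"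

text \<open>
  Atom x of the budget is sent to the pair of outputs (s 0 x, s 1 x), for s = tv_split or
  s = rr_split; under D1 and under D2 alike, the image law is the product of the laws of the
  first and of the second mechanism.
\<close>

definition tv_split :: "nat \<Rightarrow> real \<Rightarrow> real" where
  "tv_split j x = (if j = 0 then indicator {1, 5, 6, 7, 9} x
                   else indicator {2, 3, 4, 5, 6, 7} x + 2 * indicator {8, 9} x)"

definition rr_split :: "nat \<Rightarrow> real \<Rightarrow> real" where
  "rr_split j x = (if j = 0 then indicator {4, 6, 7, 8, 9} x else indicator {3, 5, 7, 8, 9} x)"

lemma pmf_of_list_wf_budget: "pmf_of_list_wf (budget d)"
  by (simp add: pmf_of_list_wf_def budget_def)

lemma measurable_tv_split [measurable]: "tv_split j \<in> borel_measurable borel"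
  unfolding tv_split_def by (simp add: borel_closed finite_imp_closed)

lemma measurable_rr_split [measurable]: "rr_split j \<in> borel_measurable borel"
  unfolding rr_split_def by (simp add: borel_closed finite_imp_closed)

lemma budget_split_tv:
  assumes [measurable]: "X \<in> sets borel" "Y \<in> sets borel"
  shows "measure (finite_dist (budget d)) (tv_split 0 -` X \<inter> tv_split 1 -` Y)
       = measure (finite_dist (randomized_response (ln 2) d)) X * measure (finite_dist (tv_mechanism (1/3) d)) Y"
proof -
  have "tv_split 0 -` X \<inter> tv_split 1 -` Y \<in> sets borel" by measurable
  then show ?thesis
    by (simp add: measure_finite_dist pmf_of_list_wf_budget pmf_of_list_wf_randomized_response
        pmf_of_list_wf_tv_mechanism indicator_inter_arith indicator_vimage)
      (cases d; simp add: budget_def randomized_response_def tv_mechanism_def tv_split_def algebra_simps)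
qed

lemma budget_split_rr:
  assumes [measurable]: "X \<in> sets borel" "Y \<in> sets borel"
  shows "measure (finite_dist (budget d)) (rr_split 0 -` X \<inter> rr_split 1 -` Y)
       = measure (finite_dist (randomized_response (ln 2) d)) X * measure (finite_dist (randomized_response (ln 3) d)) Y"
proof -
  have "rr_split 0 -` X \<inter> rr_split 1 -` Y \<in> sets borel" by measurable
  then show ?thesis
    by (simp add: measure_finite_dist pmf_of_list_wf_budget pmf_of_list_wf_randomized_response
        indicator_inter_arith indicator_vimage)
      (cases d; simp add: budget_def randomized_response_def rr_split_def algebra_simps)
qed

text \<open>The TV branch also covers first outputs other than 0 and 1, which have probability zero.\<close>

definition switching_adversary :: "bool \<Rightarrow> nat \<Rightarrow> (nat \<Rightarrow> real) \<Rightarrow> real measure" where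
  "switching_adversary d i h = finite_dist
     (if i = 0 then randomized_response (ln 2) d
      else if h 0 = 1 then randomized_response (ln 3) d else tv_mechanism (1/3) d)"

lemma L_ED_switching_adversary: "L_ED (switching_adversary True i h) (switching_adversary False i h)"
  unfolding switching_adversary_def
  by (simp add: L_ED_randomized_response L_ED_tv_mechanism)

lemma measurable_switching_adversary: "switching_adversary d i \<in> history_space i \<rightarrow>\<^sub>M prob_algebra borel"
proof (cases "i = 0")
  case True
  then show ?thesis by (simp add: switching_adversary_def[abs_def] finite_dist_in_prob_algebra)
next
  case False
  have "(\<lambda>h. h 0) \<in> history_space i \<rightarrow>\<^sub>M borel"
    using False unfolding history_space_def by (intro measurable_component_singleton) simp
  moreover have "(\<lambda>y::real. finite_dist (if y = 1 then randomized_response (ln 3) d else tv_mechanism (1/3) d))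
      \<in> borel \<rightarrow>\<^sub>M prob_algebra borel"
    unfolding if_distrib[of finite_dist]
    by (rule measurable_If) (simp_all add: finite_dist_in_prob_algebra)
  ultimately have "(\<lambda>h. finite_dist (if h 0 = 1 then randomized_response (ln 3) d else tv_mechanism (1/3) d))
      \<in> history_space i \<rightarrow>\<^sub>M prob_algebra borel"
    by (rule measurable_compose)
  then show ?thesis
    using False by (simp add: switching_adversary_def[abs_def])
qed

lemma filter_adversary_switching_adversary:
  "filter_adversary L_ED (finite_dist (budget True)) (finite_dist (budget False)) 2 switching_adversary"
  unfolding filter_adversary_def
proof (intro conjI allI impI ballI measurable_switching_adversary L_ED_switching_adversary)
  fix i :: nat and h assume "i < 2"
  then have i: "i \<le> 1" by simp
  show "blackwell_le (step_prod (switching_adversary True) i h) (step_prod (switching_adversary False) i h)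
      (finite_dist (budget True)) (finite_dist (budget False))"
    unfolding step_prod_def
  proof (cases "h 0 = 1")
    case True
    show "blackwell_le (PiM {..i} (\<lambda>j. switching_adversary True j (restrict h {..<j})))
        (PiM {..i} (\<lambda>j. switching_adversary False j (restrict h {..<j})))
        (finite_dist (budget True)) (finite_dist (budget False))"
      by (rule blackwell_le_product_two[where s = rr_split, OF _ _ _ _ _ _ i])
        (use True in \<open>simp_all add: prob_space_finite_dist switching_adversary_def budget_split_rr[unfolded One_nat_def]\<close>)
  next
    case False
    show "blackwell_le (PiM {..i} (\<lambda>j. switching_adversary True j (restrict h {..<j})))
        (PiM {..i} (\<lambda>j. switching_adversary False j (restrict h {..<j})))
        (finite_dist (budget True)) (finite_dist (budget False))"
      by (rule blackwell_le_product_two[where s = tv_split, OF _ _ _ _ _ _ i])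
        (use False in \<open>simp_all add: prob_space_finite_dist switching_adversary_def budget_split_tv[unfolded One_nat_def]\<close>)
  qed
qed

definition witness_event :: "(nat \<Rightarrow> real) set" where
  "witness_event = {h \<in> space (history_space 2). (h 0 = 0 \<and> h 1 = 2) \<or> (h 0 = 1 \<and> h 1 = 1)}"

lemma sets_witness_event: "witness_event \<in> sets (history_space 2)"
  unfolding witness_event_def history_space_def by measurable

lemma measure_joint_switching_adversary_witness_event:
  "measure (joint (switching_adversary d) 2) witness_event = (if d then 1/12 else 11/18)"
proof -
  let ?u = "\<lambda>_::nat. undefined :: real"
  have slice: "measure (switching_adversary d 1 (?u(0 := y))) {z. ?u(0 := y, 1 := z) \<in> witness_event}
    = (if y = 0 then measure (finite_dist (tv_mechanism (1/3) d)) {2}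
       else if y = 1 then measure (finite_dist (randomized_response (ln 3) d)) {1} else 0)" for y
  proof -
    have "?u(0 := y, 1 := z) \<in> space (history_space 2)" for z
      by (auto simp: space_history_space PiE_iff extensional_def)
    then have "{z. ?u(0 := y, 1 := z) \<in> witness_event} = (if y = 0 then {2} else if y = 1 then {1} else {})"
      by (auto simp: witness_event_def)
    then show ?thesis by (simp add: switching_adversary_def)
  qed
  have "measure (joint (switching_adversary d) 2) witness_event
      = (\<integral>y. measure (switching_adversary d 1 (?u(0 := y))) {z. ?u(0 := y, 1 := z) \<in> witness_event} \<partial>switching_adversary d 0 ?u)"
    by (rule measure_joint_two[OF measurable_switching_adversary measurable_switching_adversary sets_witness_event])
  also have "\<dots> = (\<integral>y. (if y = 0 then measure (finite_dist (tv_mechanism (1/3) d)) {2}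
       else if y = 1 then measure (finite_dist (randomized_response (ln 3) d)) {1} else 0)
       \<partial>finite_dist (randomized_response (ln 2) d))"
    unfolding slice by (simp add: switching_adversary_def)
  also have "\<dots> = (\<Sum>(y, w)\<leftarrow>randomized_response (ln 2) d.
       (if y = 0 then measure (finite_dist (tv_mechanism (1/3) d)) {2}
        else if y = 1 then measure (finite_dist (randomized_response (ln 3) d)) {1} else 0) * w)"
    by (rule integral_finite_dist[OF pmf_of_list_wf_randomized_response])
      (intro measurable_If measurable_const; simp)
  also have "\<dots> = (if d then 1/12 else 11/18)"
    by (cases d) (simp_all add: randomized_response_ln tv_mechanism_def measure_finite_dist pmf_of_list_wf_def)
  finally show ?thesis .
qed

lemma valid_pair_budget: "valid_pair (finite_dist (budget True)) (finite_dist (budget False))"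
  by (simp add: valid_pair_def prob_space_finite_dist)

text \<open>
  Off the atoms 8 and 9, which carry D2-mass 1/3 and no D1-mass, the likelihood ratio of the
  budget is at most 2.
\<close>

lemma budget_power_le:
  assumes "\<And>x. 0 \<le> g x \<and> g x \<le> 1"
  shows "(\<Sum>(x, w)\<leftarrow>budget False. g x * w) \<le> 1/3 + 2 * (\<Sum>(x, w)\<leftarrow>budget True. g x * w)"
  using assms[of 0] assms[of 1] assms[of 2] assms[of 3] assms[of 4] assms[of 5] assms[of 8] assms[of 9]
  by (simp add: budget_def)

lemma not_blackwell_le_joint_switching_adversary:
  "\<not> blackwell_le (joint (switching_adversary True) 2) (joint (switching_adversary False) 2)
      (finite_dist (budget True)) (finite_dist (budget False))"
proof
  assume bw: "blackwell_le (joint (switching_adversary True) 2) (joint (switching_adversary False) 2)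
      (finite_dist (budget True)) (finite_dist (budget False))"
  have "sets (joint (switching_adversary True) 2) = sets (history_space 2)"
    using joint_in_prob_algebra[of 2 "switching_adversary True"] measurable_switching_adversary
    by (simp add: space_prob_algebra)
  then have S: "witness_event \<in> sets (joint (switching_adversary True) 2)"
    using sets_witness_event by simp
  obtain g where g: "g \<in> borel_measurable borel" "\<And>x. 0 \<le> g x \<and> g x \<le> 1"
    and P: "measure (joint (switching_adversary True) 2) witness_event = (\<integral>x. g x \<partial>finite_dist (budget True))"
    and Q: "measure (joint (switching_adversary False) 2) witness_event = (\<integral>x. g x \<partial>finite_dist (budget False))"
    by (rule blackwell_le_test[OF bw valid_pair_budget S]) auto
  have "(\<Sum>(x, w)\<leftarrow>budget True. g x * w) = 1/12" "(\<Sum>(x, w)\<leftarrow>budget False. g x * w) = 11/18"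
    using P Q by (simp_all add: measure_joint_switching_adversary_witness_event integral_finite_dist
        pmf_of_list_wf_budget g(1))
  then show False
    using budget_power_le[of g, OF g(2)] by linarith
qed

theorem corollary5p1:
  shows "(\<exists>(PB :: real measure) QB k. valid_pair PB QB \<and> k \<ge> 1 \<and>
            \<not> natural_filter_free L_all PB QB k) \<and>
         (\<exists>(PB :: real measure) QB k. valid_pair PB QB \<and> k \<ge> 1 \<and>
            \<not> natural_filter_free L_ED PB QB k)"
proof -
  have ED: "\<not> natural_filter_free L_ED (finite_dist (budget True)) (finite_dist (budget False)) 2"
    using filter_adversary_switching_adversary not_blackwell_le_joint_switching_adversary
    unfolding natural_filter_free_def by blast
  have "filter_adversary L_all (finite_dist (budget True)) (finite_dist (budget False)) 2 switching_adversary"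
    using filter_adversary_switching_adversary by (simp add: filter_adversary_def L_all_def)
  then have all: "\<not> natural_filter_free L_all (finite_dist (budget True)) (finite_dist (budget False)) 2"
    using not_blackwell_le_joint_switching_adversary unfolding natural_filter_free_def by blast
  show ?thesis
    using valid_pair_budget ED all one_le_numeral by blast
qed

end
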